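(* Assume $\Theta_0$ and $\Theta_1$ are nonempty. For $\theta_0\in\Theta_0$, $\theta_1\in\Theta_1$ and $\pi_0\in[0,1]$ let $Q_{\pi_0}=\pi_0\,\delta_{\theta_0}+(1-\pi_0)\,\delta_{\theta_1}$. A menu $\mathcal{F}\subseteq\bar{\mathcal{F}}$ satisfies $\liminf_{\pi_0\to 1^-} U(Q_{\pi_0},\mathcal{F})\ge 0$ for all $\theta_0\in\Theta_0$ and all $\theta_1\in\Theta_1$ if and only if $\mathcal{F}$ is incentive-aligned.
   Context: Let $\Theta$ be a set of types partitioned as $\Theta=\Theta_0\sqcup\Theta_1$ (null and nonnull types), and let $(P_\theta)_{\theta\in\Theta}$ be probability distributions on a measurable space $\mathcal{Z}$; $\mathbb{E}_\theta$ denotes expectation with $Z\sim P_\theta$. Fix a cost $C>0$. Fix an ambient class $\bar{\mathcal{F}}$ of measurable functions $f:\mathcal{Z}\to[0,\infty)$ ("license functions") with $\mathbb{E}_\theta[f(Z)]<\infty$ for all $\theta$. A menu is a subset $\mathcal{F}\subseteq\bar{\mathcal{F}}$; it is assumed (attainment assumption) that for every $\theta$, $\sup_{f\in\mathcal{F}}\mathbb{E}_\theta[f(Z)]$ is attained when $\mathcal{F}\ne\emptyset$. Agent behavior: an agent of type $\theta$ offered $\mathcal{F}$ opts in ($I=1$) iff $\mathcal{F}\neq\emptyset$ and $\max_{f\in\mathcal{F}}\mathbb{E}_\theta[f(Z)]>C$, in which case it selects some maximizer $f^{\mathrm{br}}(\cdot;\theta,\mathcal{F})\in\arg\max_{f\in\mathcal{F}}\mathbb{E}_\theta[f(Z)]$;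 otherwise it opts out ($I=0$). The realized license is $L=f^{\mathrm{br}}(Z;\theta,\mathcal{F})$ with $Z\sim P_\theta$. The principal's utility is a function $u:\Theta\times[0,\infty)\to\mathbb{R}$ such that: for $\theta\in\Theta_1$, $u(\theta,\cdot)$ is nondecreasing and $0\le u(\theta,L)\le a_1$ for some constant $a_1<\infty$; for $\theta\in\Theta_0$, $u(\theta,\cdot)$ is nonincreasing, $u(\theta,0)\le 0$ and $u(\theta,L)<0$ for all $L>0$. For a probability distribution $Q$ on $\Theta$, the principal's expected utility is $U(Q,\mathcal{F})=\mathbb{E}_{\theta\sim Q}\big[\mathbb{E}_{Z\sim P_\theta}[u(\theta,L)\cdot I\mid\theta]\big]$. A menu $\mathcal{F}$ is incentive-aligned if $\mathbb{E}_\theta[f(Z)]\le C$ for all $\theta\in\Theta_0$ and all $f\in\mathcal{F}$. *)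

theory Defs
  imports "HOL-Probability.Probability"
begin

text \<open>Expectation of a license function under P theta (Bochner integral; the
ambient class guarantees integrability).\<close>
definition expect :: "('t \<Rightarrow> 'z measure) \<Rightarrow> 't \<Rightarrow> ('z \<Rightarrow> real) \<Rightarrow> real" where
  "expect P \<theta> f = (\<integral>z. f z \<partial>(P \<theta>))"

text \<open>Extended-real expectation (positive part minus negative part), so that
expectations of utilities that are unbounded below (value -infinity) make sense.\<close>
definition ext_expect :: "'a measure \<Rightarrow> ('a \<Rightarrow> ereal) \<Rightarrow> ereal" where
  "ext_expect M g =
     enn2ereal (\<integral>\<^sup>+ x. e2ennreal (g x) \<partial>M) - enn2ereal (\<integral>\<^sup>+ x. e2ennreal (- g x) \<partial>M)"

text \<open>Opt-in indicator: the menu is nonempty and the best-response value exceeds C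
(fbr theta is the selected maximiser, so this is max_f E_theta f > C).\<close>
definition opts_in ::
  "('t \<Rightarrow> 'z measure) \<Rightarrow> real \<Rightarrow> ('z \<Rightarrow> real) set \<Rightarrow> ('t \<Rightarrow> 'z \<Rightarrow> real) \<Rightarrow> 't \<Rightarrow> bool" where
  "opts_in P C F fbr \<theta> \<longleftrightarrow> F \<noteq> {} \<and> expect P \<theta> (fbr \<theta>) > C"

definition cond_util ::
  "('t \<Rightarrow> 'z measure) \<Rightarrow> ('t \<Rightarrow> real \<Rightarrow> real) \<Rightarrow> real \<Rightarrow> ('z \<Rightarrow> real) set
    \<Rightarrow> ('t \<Rightarrow> 'z \<Rightarrow> real) \<Rightarrow> 't \<Rightarrow> ereal" where
  "cond_util P u C F fbr \<theta> =
     ext_expect (P \<theta>)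
       (\<lambda>z. ereal (u \<theta> (fbr \<theta> z) * (if opts_in P C F fbr \<theta> then 1 else 0)))"

definition U ::
  "('t \<Rightarrow> 'z measure) \<Rightarrow> ('t \<Rightarrow> real \<Rightarrow> real) \<Rightarrow> real \<Rightarrow> ('z \<Rightarrow> real) set
    \<Rightarrow> ('t \<Rightarrow> 'z \<Rightarrow> real) \<Rightarrow> 't pmf \<Rightarrow> ereal" where
  "U P u C F fbr Q = ext_expect (measure_pmf Q) (cond_util P u C F fbr)"

definition Qmix :: "real \<Rightarrow> 't \<Rightarrow> 't \<Rightarrow> 't pmf" where
  "Qmix \<pi>0 \<theta>0 \<theta>1 = map_pmf (\<lambda>b. if b then \<theta>0 else \<theta>1) (bernoulli_pmf \<pi>0)"

definition incentive_aligned ::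
  "('t \<Rightarrow> 'z measure) \<Rightarrow> real \<Rightarrow> 't set \<Rightarrow> ('z \<Rightarrow> real) set \<Rightarrow> bool" where
  "incentive_aligned P C \<Theta>0 F \<longleftrightarrow> (\<forall>\<theta>\<in>\<Theta>0. \<forall>f\<in>F. expect P \<theta> f \<le> C)"

end

theory Submission
  imports Defs
begin

text \<open>If a null type may opt in under the menu, its best response has expectation above
  C > 0, so it exceeds some level t > 0 with positive probability; there the principal's
  utility is at most u(t) < 0, so the null type contributes a strictly negative amount
  -\<delta>. As \<pi>0 \<rightarrow> 1 the nonnull type's contribution, bounded by a1, is weighted away and
  U(Q\<pi>0) is eventually below -\<delta>/2. Conversely, under incentive alignment null types
  never opt in, so every conditional utility, and hence U, is nonnegative.\<close>

lemma ext_expect_nonneg: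
  assumes "\<And>x. x \<in> space M \<Longrightarrow> 0 \<le> g x"
  shows "0 \<le> ext_expect M g"
proof -
  have "(\<integral>\<^sup>+ x. e2ennreal (- g x) \<partial>M) = (\<integral>\<^sup>+ x. 0 \<partial>M)"
    by (rule nn_integral_cong) (use assms in \<open>auto intro: e2ennreal_neg\<close>)
  then show ?thesis unfolding ext_expect_def by (simp add: zero_ennreal.rep_eq)
qed

lemma ext_expect_le_const:
  assumes "prob_space M" "0 \<le> c" "\<And>x. x \<in> space M \<Longrightarrow> g x \<le> ereal c"
  shows "ext_expect M g \<le> ereal c"
proof -
  have "(\<integral>\<^sup>+ x. e2ennreal (g x) \<partial>M) \<le> (\<integral>\<^sup>+ x. ennreal c \<partial>M)"
    by (rule nn_integral_mono)
      (metis assms(2,3) e2ennreal_enn2ereal e2ennreal_mono enn2ereal_ennreal)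
  also have "\<dots> = ennreal c" using prob_space.emeasure_space_1[OF assms(1)] by simp
  finally have "enn2ereal (\<integral>\<^sup>+ x. e2ennreal (g x) \<partial>M) \<le> ereal c"
    by (metis assms(2) enn2ereal_ennreal less_eq_ennreal.rep_eq)
  then show ?thesis unfolding ext_expect_def by (rule ereal_diff_le_mono_left) simp
qed

lemma ext_expect_le_neg_on_set:
  assumes "finite_measure M" "\<And>x. x \<in> space M \<Longrightarrow> g x \<le> 0" "A \<in> sets M" "0 \<le> d"
    "\<And>x. x \<in> A \<Longrightarrow> g x \<le> - ereal d"
  shows "ext_expect M g \<le> - ereal (d * measure M A)"
proof -
  interpret finite_measure M by fact
  have pos_part: "(\<integral>\<^sup>+ x. e2ennreal (g x) \<partial>M) = (\<integral>\<^sup>+ x. 0 \<partial>M)"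
    by (rule nn_integral_cong) (use assms in \<open>auto intro: e2ennreal_neg\<close>)
  have "(\<integral>\<^sup>+ x. ennreal d * indicator A x \<partial>M) \<le> (\<integral>\<^sup>+ x. e2ennreal (- g x) \<partial>M)"
  proof (rule nn_integral_mono)
    fix x assume "x \<in> space M"
    show "ennreal d * indicator A x \<le> e2ennreal (- g x)"
    proof (cases "x \<in> A")
      case True
      then have "ereal d \<le> - g x" using assms(5) by (metis ereal_minus_le_minus ereal_uminus_uminus)
      then have "e2ennreal (ereal d) \<le> e2ennreal (- g x)" by (rule e2ennreal_mono)
      then show ?thesis using True by (simp add: e2ennreal_ereal)
    qed simp
  qed
  also have "(\<integral>\<^sup>+ x. ennreal d * indicator A x \<partial>M) = ennreal (d * measure M A)"
    using assms(3,4) by (subst nn_integral_cmult_indicator) (auto simp: emeasure_eq_measure ennreal_mult)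
  finally have "ereal (d * measure M A) \<le> enn2ereal (\<integral>\<^sup>+ x. e2ennreal (- g x) \<partial>M)"
    using assms(4) by (metis enn2ereal_ennreal less_eq_ennreal.rep_eq measure_nonneg zero_le_mult_iff)
  then show ?thesis unfolding ext_expect_def pos_part
    by (simp add: zero_ennreal.rep_eq) (metis ereal_minus_le_minus uminus_ereal.simps(1))
qed

lemma ext_expect_Qmix:
  assumes "0 \<le> p" "p \<le> 1"
  shows "ext_expect (measure_pmf (Qmix p a b)) g =
     enn2ereal (ennreal p * e2ennreal (g a) + ennreal (1 - p) * e2ennreal (g b))
   - enn2ereal (ennreal p * e2ennreal (- g a) + ennreal (1 - p) * e2ennreal (- g b))"
  unfolding ext_expect_def Qmix_def using assms by (simp add: mult.commute)

lemma ext_expect_Qmix_le: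
  assumes p: "0 \<le> p" "p \<le> 1" and "0 \<le> \<delta>" "0 \<le> c"
    and ga: "g a \<le> - ereal \<delta>" and gb: "g b \<le> ereal c"
  shows "ext_expect (measure_pmf (Qmix p a b)) g \<le> ereal ((1 - p) * c - p * \<delta>)"
proof -
  have "g a \<le> 0" using order.trans[OF ga, of 0] \<open>0 \<le> \<delta>\<close> by simp
  then have "e2ennreal (g a) = 0" by (rule e2ennreal_neg)
  moreover have "e2ennreal (g b) \<le> ennreal c"
    using e2ennreal_mono[OF gb] by (simp add: e2ennreal_ereal)
  ultimately have pos: "ennreal p * e2ennreal (g a) + ennreal (1 - p) * e2ennreal (g b)
      \<le> ennreal ((1 - p) * c)"
    using p \<open>0 \<le> c\<close> by (simp add: ennreal_mult mult_left_mono)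
  have "ereal \<delta> \<le> - g a" using ga by (metis ereal_minus_le_minus ereal_uminus_uminus)
  then have "ennreal \<delta> \<le> e2ennreal (- g a)"
    using e2ennreal_mono[of "ereal \<delta>" "- g a"] by (simp add: e2ennreal_ereal)
  then have neg: "ennreal (p * \<delta>)
      \<le> ennreal p * e2ennreal (- g a) + ennreal (1 - p) * e2ennreal (- g b)"
    using p \<open>0 \<le> \<delta>\<close> by (simp add: ennreal_mult mult_left_mono add_increasing2)
  have "ext_expect (measure_pmf (Qmix p a b)) g
      \<le> enn2ereal (ennreal ((1 - p) * c)) - enn2ereal (ennreal (p * \<delta>))"
    unfolding ext_expect_Qmix[OF p]
    by (intro ereal_minus_mono) (use pos neg in \<open>auto simp: less_eq_ennreal.rep_eq\<close>)
  also have "\<dots> = ereal ((1 - p) * c - p * \<delta>)"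
    using p \<open>0 \<le> c\<close> \<open>0 \<le> \<delta>\<close> by simp
  finally show ?thesis .
qed

lemma Liminf_ext_expect_Qmix_neg:
  assumes "0 < \<delta>" "0 \<le> c" "g a \<le> - ereal \<delta>" "g b \<le> ereal c"
  shows "Liminf (at_left 1) (\<lambda>p. ext_expect (measure_pmf (Qmix p a b)) g) < 0"
proof -
  \<comment> \<open>p1 solves (1 - p) c - p \<delta> = -\<delta>/2\<close>
  define p1 where "p1 = (c + \<delta> / 2) / (c + \<delta>)"
  have p1: "0 \<le> p1" "p1 < 1" "p1 * (c + \<delta>) = c + \<delta> / 2"
    using assms(1,2) unfolding p1_def by (auto simp: field_simps)
  have "eventually (\<lambda>p. p \<in> {p1<..<1}) (at_left (1::real))"
    by (rule eventually_at_left_real) (use p1 in simp)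
  then have "eventually (\<lambda>p. ext_expect (measure_pmf (Qmix p a b)) g \<le> ereal (- \<delta> / 2))
      (at_left (1::real))"
  proof (rule eventually_mono)
    fix p assume p: "p \<in> {p1<..<1}"
    have "p1 * (c + \<delta>) < p * (c + \<delta>)"
      using p assms(1,2) by (intro mult_strict_right_mono) auto
    then have "(1 - p) * c - p * \<delta> \<le> - \<delta> / 2"
      using p1(3) by (simp add: algebra_simps)
    moreover have "ext_expect (measure_pmf (Qmix p a b)) g \<le> ereal ((1 - p) * c - p * \<delta>)"
      using p p1 assms by (intro ext_expect_Qmix_le) auto
    ultimately show "ext_expect (measure_pmf (Qmix p a b)) g \<le> ereal (- \<delta> / 2)"
      by (meson ereal_less_eq(3) order.trans)
  qed
  then have "Liminf (at_left 1) (\<lambda>p. ext_expect (measure_pmf (Qmix p a b)) g) \<le> ereal (- \<delta> / 2)"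
    by (intro Liminf_le) auto
  also have "\<dots> < 0" using assms(1) by simp
  finally show ?thesis .
qed

lemma integral_pos_imp_level_set_pos:
  fixes h :: "'a \<Rightarrow> real"
  assumes "finite_measure M" "h \<in> borel_measurable M" "\<And>x. x \<in> space M \<Longrightarrow> 0 \<le> h x"
    "0 < integral\<^sup>L M h"
  shows "\<exists>t>0. 0 < measure M {x\<in>space M. t \<le> h x}"
proof (rule ccontr)
  interpret finite_measure M by fact
  let ?S = "\<lambda>n::nat. {x\<in>space M. 1 / Suc n \<le> h x}"
  assume "\<not> ?thesis"
  moreover have "(0::real) < 1 / Suc n" for n by simp
  ultimately have no_pos: "\<not> 0 < measure M (?S n)" for n by blast
  have "measure M (?S n) = 0" for n using no_pos[of n] measure_nonneg[of M "?S n"] by linarith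
  moreover have "?S n \<in> sets M" for n
    using borel_measurable_le[of "\<lambda>_. 1 / Suc n" M h] assms(2) by simp
  ultimately have "(\<Union>n. ?S n) \<in> null_sets M"
    by (intro null_sets_UN) (auto simp: null_sets_def emeasure_eq_measure)
  moreover have "{x\<in>space M. h x \<noteq> 0} \<subseteq> (\<Union>n. ?S n)"
  proof
    fix x assume x: "x \<in> {x\<in>space M. h x \<noteq> 0}"
    then have "h x > 0" using assms(3) by force
    then obtain n where "1 / Suc n < h x" using nat_approx_posE by blast
    then show "x \<in> (\<Union>n. ?S n)" using x less_imp_le by auto
  qed
  ultimately have "AE x in M. h x = 0"
    by (intro AE_I[where N="\<Union>n. ?S n"]) (auto simp: null_sets_def)
  then have "integral\<^sup>L M h = integral\<^sup>L M (\<lambda>_. 0)"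
    by (intro integral_cong_AE) (use assms(2) in auto)
  then show False using assms(4) by simp
qed

lemma ext_expect_antimono_utility_neg:
  fixes h :: "'a \<Rightarrow> real" and v :: "real \<Rightarrow> real"
  assumes "finite_measure M" "h \<in> borel_measurable M" "\<And>x. x \<in> space M \<Longrightarrow> 0 \<le> h x"
    "0 < integral\<^sup>L M h"
    and v_antimono: "\<And>L L'. 0 \<le> L \<Longrightarrow> L \<le> L' \<Longrightarrow> v L' \<le> v L"
    and "v 0 \<le> 0" and v_neg: "\<And>L. 0 < L \<Longrightarrow> v L < 0"
  shows "\<exists>\<delta>>0. ext_expect M (\<lambda>x. ereal (v (h x))) \<le> - ereal \<delta>"
proof -
  obtain t where t: "t > 0" and mt: "0 < measure M {x\<in>space M. t \<le> h x}"
    using integral_pos_imp_level_set_pos[OF assms(1-4)] by blast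
  let ?A = "{x\<in>space M. t \<le> h x}"
  have "?A \<in> sets M" using borel_measurable_le[of "\<lambda>_. t" M h] assms(2) by simp
  moreover have "v (h x) \<le> 0" if "x \<in> space M" for x
    using v_antimono[of 0 "h x"] assms(3)[OF that] \<open>v 0 \<le> 0\<close> by simp
  moreover have "v (h x) \<le> - (- v t)" if "x \<in> ?A" for x
    using v_antimono[of t "h x"] that t by simp
  ultimately have "ext_expect M (\<lambda>x. ereal (v (h x))) \<le> - ereal (- v t * measure M ?A)"
    using v_neg[OF t] by (intro ext_expect_le_neg_on_set[OF assms(1)]) simp_all
  moreover have "0 < - v t * measure M ?A" using v_neg[OF t] mt by (simp add: mult_neg_pos)
  ultimately show ?thesis by blast
qed

lemma cond_util_not_opts_in:
  assumes "\<not> opts_in P C F fbr \<theta>"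
  shows "cond_util P u C F fbr \<theta> = 0"
  using assms unfolding cond_util_def ext_expect_def by (simp add: zero_ennreal.rep_eq)

lemma cond_util_bounded:
  assumes "prob_space (P \<theta>)" "\<And>L. 0 \<le> L \<Longrightarrow> 0 \<le> u \<theta> L \<and> u \<theta> L \<le> a"
    and "opts_in P C F fbr \<theta> \<Longrightarrow> \<forall>z\<in>space (P \<theta>). 0 \<le> fbr \<theta> z"
  shows "0 \<le> cond_util P u C F fbr \<theta> \<and> cond_util P u C F fbr \<theta> \<le> ereal a"
proof (cases "opts_in P C F fbr \<theta>")
  case True
  have "0 \<le> a" using assms(2)[of 0] by simp
  have utility_range: "0 \<le> u \<theta> (fbr \<theta> z) \<and> u \<theta> (fbr \<theta> z) \<le> a" if "z \<in> space (P \<theta>)" for z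
    using assms(2,3) True that by blast
  have "0 \<le> cond_util P u C F fbr \<theta>"
    unfolding cond_util_def by (rule ext_expect_nonneg) (use True utility_range in simp)
  moreover have "cond_util P u C F fbr \<theta> \<le> ereal a"
    unfolding cond_util_def
    by (rule ext_expect_le_const[OF assms(1) \<open>0 \<le> a\<close>]) (use True utility_range in simp)
  ultimately show ?thesis ..
next
  case False
  then show ?thesis using assms(2)[of 0] by (simp add: cond_util_not_opts_in)
qed

lemma cond_util_opts_in_neg:
  assumes "prob_space (P \<theta>)" "fbr \<theta> \<in> borel_measurable (P \<theta>)"
    "\<forall>z\<in>space (P \<theta>). 0 \<le> fbr \<theta> z" "0 < C" "opts_in P C F fbr \<theta>"
    "\<And>L L'. 0 \<le> L \<Longrightarrow> L \<le> L' \<Longrightarrow> u \<theta> L' \<le> u \<theta> L" "u \<theta> 0 \<le> 0"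
    "\<And>L. 0 < L \<Longrightarrow> u \<theta> L < 0"
  shows "\<exists>\<delta>>0. cond_util P u C F fbr \<theta> \<le> - ereal \<delta>"
proof -
  have "finite_measure (P \<theta>)" using assms(1) by (simp add: prob_space_def)
  moreover have "0 < integral\<^sup>L (P \<theta>) (fbr \<theta>)"
    using assms(4,5) unfolding opts_in_def expect_def by simp
  ultimately show ?thesis
    using assms ext_expect_antimono_utility_neg[of "P \<theta>" "fbr \<theta>" "u \<theta>"]
    unfolding cond_util_def by simp
qed

lemma opts_in_iff_exceeds_cost:
  assumes "F \<noteq> {} \<Longrightarrow> \<forall>\<theta>. fbr \<theta> \<in> F \<and> (\<forall>g\<in>F. expect P \<theta> g \<le> expect P \<theta> (fbr \<theta>))"
  shows "opts_in P C F fbr \<theta> \<longleftrightarrow> (\<exists>f\<in>F. C < expect P \<theta> f)"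
proof
  assume "opts_in P C F fbr \<theta>"
  then show "\<exists>f\<in>F. C < expect P \<theta> f" using assms unfolding opts_in_def by blast
next
  assume "\<exists>f\<in>F. C < expect P \<theta> f"
  then obtain f where "f \<in> F" "C < expect P \<theta> f" by blast
  moreover have "expect P \<theta> f \<le> expect P \<theta> (fbr \<theta>)" using assms \<open>f \<in> F\<close> by blast
  ultimately show "opts_in P C F fbr \<theta>" unfolding opts_in_def by auto
qed

lemma incentive_aligned_iff_no_null_opts_in:
  assumes "F \<noteq> {} \<Longrightarrow> \<forall>\<theta>. fbr \<theta> \<in> F \<and> (\<forall>g\<in>F. expect P \<theta> g \<le> expect P \<theta> (fbr \<theta>))"
  shows "incentive_aligned P C \<Theta>0 F \<longleftrightarrow> (\<forall>\<theta>\<in>\<Theta>0. \<not> opts_in P C F fbr \<theta>)"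
  using opts_in_iff_exceeds_cost[OF assms] unfolding incentive_aligned_def by (meson not_less)

theorem proposition2p3:
  fixes \<Theta>0 \<Theta>1 :: "'t set"
    and Z :: "'z measure"
    and P :: "'t \<Rightarrow> 'z measure"
    and C a1 :: real
    and Fbar F :: "('z \<Rightarrow> real) set"
    and u :: "'t \<Rightarrow> real \<Rightarrow> real"
    and fbr :: "'t \<Rightarrow> 'z \<Rightarrow> real"
  assumes partition: "\<Theta>0 \<inter> \<Theta>1 = {}" "\<Theta>0 \<union> \<Theta>1 = UNIV"
    and nonempty: "\<Theta>0 \<noteq> {}" "\<Theta>1 \<noteq> {}"
    and probs: "\<And>\<theta>. prob_space (P \<theta>)" "\<And>\<theta>. sets (P \<theta>) = sets Z"
    and C_pos: "C > 0"
    and Fbar: "\<And>f. f \<in> Fbar \<Longrightarrow> f \<in> borel_measurable Z \<and> (\<forall>z\<in>space Z. 0 \<le> f z)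
                    \<and> (\<forall>\<theta>. integrable (P \<theta>) f)"
    and menu: "F \<subseteq> Fbar"
    and attain: "F \<noteq> {} \<Longrightarrow> \<forall>\<theta>. \<exists>f\<in>F. \<forall>g\<in>F. expect P \<theta> g \<le> expect P \<theta> f"
    and best_response: "F \<noteq> {} \<Longrightarrow>
          \<forall>\<theta>. fbr \<theta> \<in> F \<and> (\<forall>g\<in>F. expect P \<theta> g \<le> expect P \<theta> (fbr \<theta>))"
    and u1: "\<And>\<theta>. \<theta> \<in> \<Theta>1 \<Longrightarrow> mono_on {0..} (u \<theta>)"
            "\<And>\<theta> L. \<theta> \<in> \<Theta>1 \<Longrightarrow> 0 \<le> L \<Longrightarrow> 0 \<le> u \<theta> L \<and> u \<theta> L \<le> a1"
    and u0: "\<And>\<theta> L L'. \<theta> \<in> \<Theta>0 \<Longrightarrow> 0 \<le> L \<Longrightarrow> L \<le> L' \<Longrightarrow> u \<theta> L' \<le> u \<theta> L"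
            "\<And>\<theta>. \<theta> \<in> \<Theta>0 \<Longrightarrow> u \<theta> 0 \<le> 0"
            "\<And>\<theta> L. \<theta> \<in> \<Theta>0 \<Longrightarrow> L > 0 \<Longrightarrow> u \<theta> L < 0"
  shows "(\<forall>\<theta>0\<in>\<Theta>0. \<forall>\<theta>1\<in>\<Theta>1.
            Liminf (at_left 1) (\<lambda>\<pi>0. U P u C F fbr (Qmix \<pi>0 \<theta>0 \<theta>1)) \<ge> 0)
         \<longleftrightarrow> incentive_aligned P C \<Theta>0 F"
proof -
  have meas: "f \<in> borel_measurable (P \<theta>)" if "f \<in> Fbar" for f \<theta>
    using Fbar[OF that] measurable_cong_sets[OF probs(2) refl] by blast
  have fbr_Fbar: "fbr \<theta> \<in> Fbar" if "opts_in P C F fbr \<theta>" for \<theta>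
    using that best_response menu unfolding opts_in_def by blast
  have fbr_nonneg: "\<forall>z\<in>space (P \<theta>). 0 \<le> fbr \<theta> z" if "opts_in P C F fbr \<theta>" for \<theta>
    using Fbar[OF fbr_Fbar[OF that]] sets_eq_imp_space_eq[OF probs(2)] by blast
  have cu_nonnull: "0 \<le> cond_util P u C F fbr \<theta> \<and> cond_util P u C F fbr \<theta> \<le> ereal a1"
    if "\<theta> \<in> \<Theta>1" for \<theta>
    using cond_util_bounded[where P = P and \<theta> = \<theta> and u = u, OF probs(1) u1(2)[OF that]]
      fbr_nonneg by blast
  have aligned_iff: "incentive_aligned P C \<Theta>0 F \<longleftrightarrow> (\<forall>\<theta>\<in>\<Theta>0. \<not> opts_in P C F fbr \<theta>)"
    using best_response by (rule incentive_aligned_iff_no_null_opts_in)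
  show ?thesis unfolding aligned_iff
  proof (rule iffI, intro ballI notI)
    fix \<theta>0 assume L: "\<forall>\<theta>0\<in>\<Theta>0. \<forall>\<theta>1\<in>\<Theta>1.
            Liminf (at_left 1) (\<lambda>\<pi>0. U P u C F fbr (Qmix \<pi>0 \<theta>0 \<theta>1)) \<ge> 0"
      and \<theta>0: "\<theta>0 \<in> \<Theta>0" and opt: "opts_in P C F fbr \<theta>0"
    obtain \<delta> where "0 < \<delta>" and null_neg: "cond_util P u C F fbr \<theta>0 \<le> - ereal \<delta>"
      using cond_util_opts_in_neg[where P = P and \<theta> = \<theta>0 and u = u, OF probs(1)
          meas[OF fbr_Fbar[OF opt]] fbr_nonneg[OF opt] C_pos opt u0(1)[OF \<theta>0] u0(2,3)[OF \<theta>0]]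
      by blast
    obtain \<theta>1 where \<theta>1: "\<theta>1 \<in> \<Theta>1" using nonempty(2) by blast
    have "0 \<le> a1" using u1(2)[OF \<theta>1, of 0] by simp
    have "Liminf (at_left 1) (\<lambda>\<pi>0. U P u C F fbr (Qmix \<pi>0 \<theta>0 \<theta>1)) < 0"
      unfolding U_def
      by (rule Liminf_ext_expect_Qmix_neg[where g = "cond_util P u C F fbr",
            OF \<open>0 < \<delta>\<close> \<open>0 \<le> a1\<close> null_neg]) (use cu_nonnull[OF \<theta>1] in blast)
    moreover have "0 \<le> Liminf (at_left 1) (\<lambda>\<pi>0. U P u C F fbr (Qmix \<pi>0 \<theta>0 \<theta>1))"
      using L \<theta>0 \<theta>1 by blast
    ultimately show False by simp
  next
    assume no_null: "\<forall>\<theta>\<in>\<Theta>0. \<not> opts_in P C F fbr \<theta>"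
    have cu_nonneg: "0 \<le> cond_util P u C F fbr \<theta>" for \<theta>
      using cu_nonnull no_null partition cond_util_not_opts_in[of P C F fbr \<theta> u]
      by (metis Un_iff UNIV_I order.refl)
    show "\<forall>\<theta>0\<in>\<Theta>0. \<forall>\<theta>1\<in>\<Theta>1.
            Liminf (at_left 1) (\<lambda>\<pi>0. U P u C F fbr (Qmix \<pi>0 \<theta>0 \<theta>1)) \<ge> 0"
      unfolding U_def
      by (intro ballI Liminf_bounded always_eventually allI ext_expect_nonneg cu_nonneg)
  qed
qed

end
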